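(* Let $q_1,q_2,q_3\in(0,1)$ with $q_1+q_2+q_3=1$. On $\mathbb{C}^3$ with basis $\{|0\rangle,|1\rangle,|2\rangle\}$ define the unitaries $L_1=|0\rangle\langle0|+|1\rangle\langle1|+|2\rangle\langle2|$, $L_2=|1\rangle\langle0|+|2\rangle\langle1|+|0\rangle\langle2|$, $L_3=-|0\rangle\langle0|+|1\rangle\langle1|+|2\rangle\langle2|$, $S_1=|2\rangle\langle0|+|0\rangle\langle1|+|1\rangle\langle2|$, $S_2=-|1\rangle\langle0|+|2\rangle\langle1|+|0\rangle\langle2|$, $S_3=-|2\rangle\langle0|+|0\rangle\langle1|+|1\rangle\langle2|$, and the noisy unitary channels $\mathcal{L}(\rho)=\sum_{k=1}^3 q_kL_k\rho L_k^\dagger$ and $\mathcal{S}(\rho)=\sum_{k=1}^3 q_kS_k\rho S_k^\dagger$. Then the optimal probe for discriminating $\mathcal{L}$ and $\mathcal{S}$ is a non-maximally entangled state: the maximum of the success probability over all probes is attained by a non-maximally entangled pure state of $\mathbb{C}^3\otimes\mathbb{C}^3$.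
   Context: For two channels chosen with equal priors $1/2$, the single-shot success probability with a single-system probe $\rho$ is $\frac12+\frac14\|\mathcal{N}_1(\rho)-\mathcal{N}_2(\rho)\|_1$, and with a bipartite probe $\rho_{AB}$ on $\mathbb{C}^3\otimes\mathbb{C}^{d'}$ (channel acting on $A$) it is $\frac12+\frac14\|(\mathcal{N}_1\otimes\mathrm{id})(\rho_{AB})-(\mathcal{N}_2\otimes\mathrm{id})(\rho_{AB})\|_1$; $\|\cdot\|_1$ is the trace norm. The optimal probe maximizes this over all single-system and bipartite probes. A pure state on $\mathbb{C}^3\otimes\mathbb{C}^3$ is maximally entangled if its reduced states are $\mathbb{I}_3/3$; non-maximally entangled means entangled but not maximally entangled. *)

theory Defs
  imports "Jordan_Normal_Form.Schur_Decomposition"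
begin

(* Conventions: C^n is represented by complex vec of dimension n, operators by complex n x n mat.
   The tensor product C^m (x) C^n uses the Kronecker convention |i>|j> ~ basis index i*n+j. *)

definition kron :: "complex mat \<Rightarrow> complex mat \<Rightarrow> complex mat" where
  "kron A B = mat (dim_row A * dim_row B) (dim_col A * dim_col B)
     (\<lambda>(i,j). A $$ (i div dim_row B, j div dim_col B) * B $$ (i mod dim_row B, j mod dim_col B))"

definition mtrace :: "complex mat \<Rightarrow> complex" where
  "mtrace A = (\<Sum>i<dim_row A. A $$ (i,i))"

definition hermitian_mat :: "complex mat \<Rightarrow> bool" where
  "hermitian_mat A \<longleftrightarrow> mat_adjoint A = A"

definition psd_mat :: "nat \<Rightarrow> complex mat \<Rightarrow> bool" where
  "psd_mat n A \<longleftrightarrow> A \<in> carrier_mat n n \<and> hermitian_mat A \<and>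
     (\<forall>v \<in> carrier_vec n. 0 \<le> Re (conjugate v \<bullet> (A *\<^sub>v v)))"

definition density_mat :: "nat \<Rightarrow> complex mat \<Rightarrow> bool" where
  "density_mat n \<rho> \<longleftrightarrow> psd_mat n \<rho> \<and> mtrace \<rho> = 1"

definition psd_sqrt :: "complex mat \<Rightarrow> complex mat" where
  "psd_sqrt M = (THE P. psd_mat (dim_row M) P \<and> P * P = M)"

definition trace_norm :: "complex mat \<Rightarrow> real" where
  "trace_norm X = Re (mtrace (psd_sqrt (mat_adjoint X * X)))"

definition noisy3 :: "real \<Rightarrow> real \<Rightarrow> real \<Rightarrow> complex mat \<Rightarrow> complex mat \<Rightarrow> complex mat
    \<Rightarrow> complex mat \<Rightarrow> complex mat" where
  "noisy3 q1 q2 q3 K1 K2 K3 \<rho> =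
     complex_of_real q1 \<cdot>\<^sub>m (K1 * \<rho> * mat_adjoint K1)
   + complex_of_real q2 \<cdot>\<^sub>m (K2 * \<rho> * mat_adjoint K2)
   + complex_of_real q3 \<cdot>\<^sub>m (K3 * \<rho> * mat_adjoint K3)"

definition L1 :: "complex mat" where "L1 = mat_of_rows_list 3 [[1,0,0],[0,1,0],[0,0,1]]"
definition L2 :: "complex mat" where "L2 = mat_of_rows_list 3 [[0,0,1],[1,0,0],[0,1,0]]"
definition L3 :: "complex mat" where "L3 = mat_of_rows_list 3 [[-1,0,0],[0,1,0],[0,0,1]]"
definition S1 :: "complex mat" where "S1 = mat_of_rows_list 3 [[0,1,0],[0,0,1],[1,0,0]]"
definition S2 :: "complex mat" where "S2 = mat_of_rows_list 3 [[0,0,1],[-1,0,0],[0,1,0]]"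
definition S3 :: "complex mat" where "S3 = mat_of_rows_list 3 [[0,1,0],[0,0,1],[-1,0,0]]"

definition chanL :: "real \<Rightarrow> real \<Rightarrow> real \<Rightarrow> complex mat \<Rightarrow> complex mat" where
  "chanL q1 q2 q3 = noisy3 q1 q2 q3 L1 L2 L3"
definition chanS :: "real \<Rightarrow> real \<Rightarrow> real \<Rightarrow> complex mat \<Rightarrow> complex mat" where
  "chanS q1 q2 q3 = noisy3 q1 q2 q3 S1 S2 S3"

definition chanL_ext :: "real \<Rightarrow> real \<Rightarrow> real \<Rightarrow> nat \<Rightarrow> complex mat \<Rightarrow> complex mat" where
  "chanL_ext q1 q2 q3 d = noisy3 q1 q2 q3 (kron L1 (1\<^sub>m d)) (kron L2 (1\<^sub>m d)) (kron L3 (1\<^sub>m d))"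
definition chanS_ext :: "real \<Rightarrow> real \<Rightarrow> real \<Rightarrow> nat \<Rightarrow> complex mat \<Rightarrow> complex mat" where
  "chanS_ext q1 q2 q3 d = noisy3 q1 q2 q3 (kron S1 (1\<^sub>m d)) (kron S2 (1\<^sub>m d)) (kron S3 (1\<^sub>m d))"

text \<open>Success probabilities (equal priors).\<close>
definition psucc_single :: "real \<Rightarrow> real \<Rightarrow> real \<Rightarrow> complex mat \<Rightarrow> real" where
  "psucc_single q1 q2 q3 \<rho> = 1/2 + 1/4 * trace_norm (chanL q1 q2 q3 \<rho> - chanS q1 q2 q3 \<rho>)"
definition psucc_bip :: "real \<Rightarrow> real \<Rightarrow> real \<Rightarrow> nat \<Rightarrow> complex mat \<Rightarrow> real" where
  "psucc_bip q1 q2 q3 d \<rho> = 1/2 + 1/4 * trace_norm (chanL_ext q1 q2 q3 d \<rho> - chanS_ext q1 q2 q3 d \<rho>)"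

definition normalized_vec :: "nat \<Rightarrow> complex vec \<Rightarrow> bool" where
  "normalized_vec n \<psi> \<longleftrightarrow> \<psi> \<in> carrier_vec n \<and> (\<Sum>i<n. (cmod (\<psi> $ i))\<^sup>2) = 1"

definition proj :: "complex vec \<Rightarrow> complex mat" where
  "proj \<psi> = mat (dim_vec \<psi>) (dim_vec \<psi>) (\<lambda>(i,j). \<psi> $ i * cnj (\<psi> $ j))"

definition product_vec33 :: "complex vec \<Rightarrow> bool" where
  "product_vec33 \<psi> \<longleftrightarrow> (\<exists>a b. a \<in> carrier_vec 3 \<and> b \<in> carrier_vec 3 \<and>
      \<psi> = vec 9 (\<lambda>k. a $ (k div 3) * b $ (k mod 3)))"

definition ptrace_B :: "nat \<Rightarrow> nat \<Rightarrow> complex mat \<Rightarrow> complex mat" where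
  "ptrace_B dA dB \<rho> = mat dA dA (\<lambda>(i,j). \<Sum>k<dB. \<rho> $$ (i*dB+k, j*dB+k))"
definition ptrace_A :: "nat \<Rightarrow> nat \<Rightarrow> complex mat \<Rightarrow> complex mat" where
  "ptrace_A dA dB \<rho> = mat dB dB (\<lambda>(i,j). \<Sum>k<dA. \<rho> $$ (k*dB+i, k*dB+j))"

definition entangled_pure33 :: "complex vec \<Rightarrow> bool" where
  "entangled_pure33 \<psi> \<longleftrightarrow> normalized_vec 9 \<psi> \<and> \<not> product_vec33 \<psi>"

definition max_entangled33 :: "complex vec \<Rightarrow> bool" where
  "max_entangled33 \<psi> \<longleftrightarrow> normalized_vec 9 \<psi> \<and>
     ptrace_B 3 3 (proj \<psi>) = (1/3) \<cdot>\<^sub>m 1\<^sub>m 3 \<and> ptrace_A 3 3 (proj \<psi>) = (1/3) \<cdot>\<^sub>m 1\<^sub>m 3"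

end

(* Every channel output is a density operator and the trace distance of two density operators
   is at most 2, so no probe, with or without an ancilla, succeeds with probability above 1.
   For a bipartite pure probe psi, the inner product of (K (x) 1) psi and (K' (x) 1) psi is
   tr (K^dagger K' rho_A), where rho_A is the reduced state of psi.  For the probe below
   rho_A = diag (1/2, 1/3, 1/6); every L_j^dagger S_k has zero diagonal except
   L_2^dagger S_2 = diag (-1, 1, 1), and 1/2 = 1/3 + 1/6 cancels that one as well.  Hence the two
   channel outputs are mixtures of mutually orthogonal pure states, their supports are
   orthogonal and they are perfectly distinguishable.  The probe is entangled, but since
   rho_A is not I/3 it is not maximally entangled. *)

theory Submission
  imports Defs
begin

lemma sum_lessThan_mult_split:
  fixes g :: "nat \<Rightarrow> 'a :: comm_monoid_add"
  shows "(\<Sum>t<k * l. g t) = (\<Sum>s<k. \<Sum>r<l. g (s * l + r))"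
proof -
  have "(\<Sum>t<k * l. g t) = (\<Sum>s<k. sum g {s * l..<s * l + l})" by (rule sum.nat_group[symmetric])
  also have "\<dots> = (\<Sum>s<k. \<Sum>r<l. g (s * l + r))"
    by (rule sum.cong) (simp_all add: sum.atLeastLessThan_shift_0 atLeast0LessThan)
  finally show ?thesis .
qed

lemma mult_index_bounds:
  fixes s r k l :: nat
  assumes "s < k" "r < l"
  shows "s * l + r < k * l" "(s * l + r) div l = s" "(s * l + r) mod l = r"
proof -
  have "Suc s * l \<le> k * l" using assms(1) by (intro mult_le_mono1) simp
  then show "s * l + r < k * l" using assms(2) by simp
qed (use assms in auto)

lemma sum_lessThan_3: "(\<Sum>k<3. f k) = f 0 + f 1 + f (2::nat)"
  by (simp add: eval_nat_numeral)

lemma All_less_3: "(\<forall>i<3. P i) \<longleftrightarrow> P 0 \<and> P 1 \<and> P (2::nat)"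
  by (auto simp: less_Suc_eq eval_nat_numeral)

lemma conjugate_scalar_prod_sum:
  "x \<in> carrier_vec n \<Longrightarrow> y \<in> carrier_vec n \<Longrightarrow> conjugate x \<bullet> y = (\<Sum>i<n. cnj (x $ i) * y $ i)"
  by (simp add: scalar_prod_def atLeast0LessThan)

lemma mat_diag_dims[simp]: "dim_row (mat_diag n f) = n" "dim_col (mat_diag n f) = n"
  unfolding mat_diag_def by simp_all

lemma mat_diag_index[simp]: "i < n \<Longrightarrow> j < n \<Longrightarrow> mat_diag n f $$ (i,j) = (if i = j then f i else 0)"
  unfolding mat_diag_def by simp

lemma mat_diag_mult_vec:
  fixes f :: "nat \<Rightarrow> 'a :: semiring_0"
  assumes "w \<in> carrier_vec n"
  shows "mat_diag n f *\<^sub>v w = vec n (\<lambda>i. f i * w $ i)"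
proof (rule eq_vecI)
  fix i assume "i < dim_vec (vec n (\<lambda>i. f i * w $ i))"
  then have i: "i < n" by simp
  have "(mat_diag n f *\<^sub>v w) $ i = (\<Sum>j\<in>{0..<n}. (if i = j then f i else 0) * w $ j)"
    using i assms by (simp add: scalar_prod_def row_def)
  also have "\<dots> = (\<Sum>j\<in>{0..<n}. if i = j then f i * w $ j else 0)"
    by (rule sum.cong) auto
  finally show "(mat_diag n f *\<^sub>v w) $ i = vec n (\<lambda>i. f i * w $ i) $ i" using i by simp
qed (use assms in simp)

lemma mat_of_rows_list_carrier: "length rs = n \<Longrightarrow> mat_of_rows_list nc rs \<in> carrier_mat n nc"
  unfolding mat_of_rows_list_def by simp

lemma mat_of_rows_list_index:
  "i < length rs \<Longrightarrow> j < nc \<Longrightarrow> mat_of_rows_list nc rs $$ (i,j) = rs ! i ! j"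
  unfolding mat_of_rows_list_def by simp

lemma smult_mat_mult_vec:
  assumes A: "A \<in> carrier_mat n m" and v: "v \<in> carrier_vec m"
  shows "(c \<cdot>\<^sub>m A) *\<^sub>v v = c \<cdot>\<^sub>v (A *\<^sub>v v)"
  by (rule eq_vecI) (use A v in \<open>simp_all add: scalar_prod_def sum_distrib_left mult.assoc\<close>)

lemma mult_unit_vec:
  fixes U :: "'a :: semiring_1 mat"
  assumes "U \<in> carrier_mat n m" "i < m"
  shows "U *\<^sub>v unit_vec m i = col U i"
  by (rule eq_vecI) (use assms in auto)

lemma add_mult_eq_0:
  fixes A B C :: "'a :: semiring_0 mat"
  assumes "A \<in> carrier_mat n n" "B \<in> carrier_mat n n" "C \<in> carrier_mat n n"
    and "A * C = 0\<^sub>m n n" "B * C = 0\<^sub>m n n"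
  shows "(A + B) * C = 0\<^sub>m n n"
  using assms by (simp add: add_mult_distrib_mat[of A n n B C n])

lemma mult_add_eq_0:
  fixes A B C :: "'a :: semiring_0 mat"
  assumes "A \<in> carrier_mat n n" "B \<in> carrier_mat n n" "C \<in> carrier_mat n n"
    and "A * B = 0\<^sub>m n n" "A * C = 0\<^sub>m n n"
  shows "A * (B + C) = 0\<^sub>m n n"
  using assms by (simp add: mult_add_distrib_mat[of A n n B n C])

lemma smult_mult_smult_eq_0:
  fixes A B :: "'a :: comm_semiring_0 mat"
  assumes A: "A \<in> carrier_mat n n" and B: "B \<in> carrier_mat n n" and AB: "A * B = 0\<^sub>m n n"
  shows "(a \<cdot>\<^sub>m A) * (b \<cdot>\<^sub>m B) = 0\<^sub>m n n"
proof -
  have "(a \<cdot>\<^sub>m A) * (b \<cdot>\<^sub>m B) = a \<cdot>\<^sub>m (b \<cdot>\<^sub>m (A * B))"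
    using mult_smult_assoc_mat[OF A smult_carrier_mat[OF B]] mult_smult_distrib[OF A B] by simp
  then show ?thesis using AB by (intro eq_matI) auto
qed

abbreviation adj :: "complex mat \<Rightarrow> complex mat" where "adj \<equiv> mat_adjoint"

lemma adj_dim[simp]: "dim_row (adj A) = dim_col A" "dim_col (adj A) = dim_row A"
  unfolding mat_adjoint_def by auto

lemma adj_carrier[simp]: "A \<in> carrier_mat n m \<Longrightarrow> adj A \<in> carrier_mat m n"
  unfolding carrier_mat_def by simp

lemma adj_index[simp]: "i < dim_col A \<Longrightarrow> j < dim_row A \<Longrightarrow> adj A $$ (i,j) = cnj (A $$ (j,i))"
  unfolding mat_adjoint_def by (simp add: mat_of_rows_index)

lemma adj_adj[simp]: "adj (adj A) = A"
  by (rule eq_matI) auto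

lemma adj_mult:
  assumes "A \<in> carrier_mat n k" "B \<in> carrier_mat k m"
  shows "adj (A * B) = adj B * adj A"
proof (rule eq_matI)
  fix i j assume "i < dim_row (adj B * adj A)" "j < dim_col (adj B * adj A)"
  then show "adj (A * B) $$ (i,j) = (adj B * adj A) $$ (i,j)"
    using assms by (auto simp: scalar_prod_def row_def col_def intro!: sum.cong)
qed (use assms in auto)

lemma adj_one[simp]: "adj (1\<^sub>m n) = 1\<^sub>m n"
  by (rule eq_matI) auto

lemma adj_add:
  assumes "A \<in> carrier_mat n m" "B \<in> carrier_mat n m"
  shows "adj (A + B) = adj A + adj B"
  by (rule eq_matI) (use assms in auto)

lemma adj_minus:
  assumes "A \<in> carrier_mat n m" "B \<in> carrier_mat n m"
  shows "adj (A - B) = adj A - adj B"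
  by (rule eq_matI) (use assms in auto)

lemma adj_smult: "adj (c \<cdot>\<^sub>m A) = cnj c \<cdot>\<^sub>m adj A"
  by (rule eq_matI) auto

lemma row_adj: "i < dim_col A \<Longrightarrow> row (adj A) i = conjugate (col A i)"
  by (rule eq_vecI) auto

lemma conjugate_scalar_prod_adj:
  assumes "B \<in> carrier_mat m n" "x \<in> carrier_vec n" "y \<in> carrier_vec m"
  shows "conjugate x \<bullet> (adj B *\<^sub>v y) = conjugate (B *\<^sub>v x) \<bullet> y"
proof -
  have "conjugate x \<bullet> (adj B *\<^sub>v y) = (\<Sum>i<n. \<Sum>j<m. cnj (x $ i) * cnj (B $$ (j,i)) * y $ j)"
    using assms by (auto simp: scalar_prod_def row_def atLeast0LessThan sum_distrib_left mult.assoc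
        intro!: sum.cong)
  also have "\<dots> = (\<Sum>j<m. \<Sum>i<n. cnj (x $ i) * cnj (B $$ (j,i)) * y $ j)"
    by (rule sum.swap)
  also have "\<dots> = conjugate (B *\<^sub>v x) \<bullet> y"
    using assms by (auto simp: scalar_prod_def row_def atLeast0LessThan cnj_sum sum_distrib_left
        sum_distrib_right mult_ac intro!: sum.cong)
  finally show ?thesis .
qed

lemma conj_carrier: "U \<in> carrier_mat n n \<Longrightarrow> D \<in> carrier_mat n n \<Longrightarrow> U * D * adj U \<in> carrier_mat n n"
  by (metis adj_carrier mult_carrier_mat)

lemma adj_conj:
  assumes U: "U \<in> carrier_mat n n" and D: "D \<in> carrier_mat n n"
  shows "adj (U * D * adj U) = U * adj D * adj U"
  using adj_mult[OF mult_carrier_mat[OF U D] adj_carrier[OF U]] adj_mult[OF U D]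
    assoc_mult_mat[OF U adj_carrier[OF D] adj_carrier[OF U]] by simp

lemma conj_conj:
  assumes U: "U \<in> carrier_mat n n" and W: "W \<in> carrier_mat n n" and D: "D \<in> carrier_mat n n"
  shows "U * (W * D * adj W) * adj U = (U * W) * D * adj (U * W)"
  unfolding adj_mult[OF U W] using U W D
  by (simp add: assoc_mult_mat[of _ n n _ n _ n] mult_carrier_mat[of _ n n _ n])

lemma mtrace_mult_comm:
  assumes "A \<in> carrier_mat n m" "B \<in> carrier_mat m n"
  shows "mtrace (A * B) = mtrace (B * A)"
proof -
  have "mtrace (A * B) = (\<Sum>i<n. \<Sum>k<m. A $$ (i,k) * B $$ (k,i))"
    using assms by (auto simp: mtrace_def scalar_prod_def row_def col_def atLeast0LessThan)
  also have "\<dots> = (\<Sum>k<m. \<Sum>i<n. B $$ (k,i) * A $$ (i,k))"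
    by (subst sum.swap) (simp add: mult.commute)
  also have "\<dots> = mtrace (B * A)"
    using assms by (auto simp: mtrace_def scalar_prod_def row_def col_def atLeast0LessThan)
  finally show ?thesis .
qed

lemma mtrace_add: "A \<in> carrier_mat n n \<Longrightarrow> B \<in> carrier_mat n n \<Longrightarrow> mtrace (A + B) = mtrace A + mtrace B"
  by (auto simp: mtrace_def sum.distrib)

lemma mtrace_smult: "A \<in> carrier_mat n n \<Longrightarrow> mtrace (c \<cdot>\<^sub>m A) = c * mtrace A"
  by (auto simp: mtrace_def sum_distrib_left)

lemma mtrace_adj_mult_mat_diag:
  assumes A: "A \<in> carrier_mat n n" and B: "B \<in> carrier_mat n n"
  shows "mtrace (adj A * B * mat_diag n f) = (\<Sum>i<n. (\<Sum>k<n. cnj (A $$ (k,i)) * B $$ (k,i)) * f i)"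
  unfolding mat_diag_mult_right[OF mult_carrier_mat[OF adj_carrier[OF A] B]] mtrace_def
  using A B by (simp add: scalar_prod_def atLeast0LessThan)

section \<open>Unitary matrices and the spectral theorem\<close>

definition unitary :: "nat \<Rightarrow> complex mat \<Rightarrow> bool" where
  "unitary n U \<longleftrightarrow> U \<in> carrier_mat n n \<and> adj U * U = 1\<^sub>m n \<and> U * adj U = 1\<^sub>m n"

lemma unitaryI:
  assumes "U \<in> carrier_mat n n" "adj U * U = 1\<^sub>m n"
  shows "unitary n U"
  unfolding unitary_def using assms mat_mult_left_right_inverse[of "adj U" n U] by simp

lemma unitary_carrier: "unitary n U \<Longrightarrow> U \<in> carrier_mat n n"
  unfolding unitary_def by simp

lemma unitary_mult:
  assumes U: "unitary n U" and V: "unitary n V"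
  shows "unitary n (U * V)"
proof (rule unitaryI)
  have Uc: "U \<in> carrier_mat n n" and Vc: "V \<in> carrier_mat n n"
    using U V unitary_carrier by auto
  show "U * V \<in> carrier_mat n n" using Uc Vc by simp
  have "adj (U * V) * (U * V) = adj V * ((adj U * U) * V)"
    using Uc Vc by (simp add: adj_mult assoc_mult_mat[of _ n n _ n _ n])
  also have "\<dots> = 1\<^sub>m n" using U V Vc unfolding unitary_def by simp
  finally show "adj (U * V) * (U * V) = 1\<^sub>m n" .
qed

lemma unitary_cancel_left:
  assumes U: "unitary n U" and Z: "Z \<in> carrier_mat n m"
  shows "adj U * (U * Z) = Z"
  using U Z assoc_mult_mat[OF adj_carrier[OF unitary_carrier[OF U]] unitary_carrier[OF U] Z]
  unfolding unitary_def by simp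

lemma unitary_conj_adj_conj:
  assumes U: "unitary n U" and A: "A \<in> carrier_mat n n"
  shows "U * (adj U * A * U) * adj U = A"
proof -
  have Uc: "U \<in> carrier_mat n n" using U unitary_carrier by blast
  have "U * (adj U * A * U) * adj U = (U * adj U) * A * (U * adj U)"
    using Uc A by (simp add: assoc_mult_mat[of _ n n _ n _ n] mult_carrier_mat[of _ n n _ n])
  then show ?thesis using U A unfolding unitary_def by simp
qed

lemma unitary_cols_orthonormal:
  assumes U: "unitary n U" and i: "i < n" and j: "j < n"
  shows "conjugate (col U i) \<bullet> col U j = (if i = j then 1 else 0)"
proof -
  have "conjugate (col U i) \<bullet> col U j = (adj U * U) $$ (i,j)"
    using unitary_carrier[OF U] i j by (simp add: scalar_prod_def row_def col_def)
  then show ?thesis using U i j unfolding unitary_def by simp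
qed

lemma adj_mult_col:
  assumes U: "unitary n U" and i: "i < n"
  shows "adj U *\<^sub>v col U i = unit_vec n i"
proof -
  have Uc: "U \<in> carrier_mat n n" using U unitary_carrier by blast
  have "adj U *\<^sub>v col U i = col (adj U * U) i"
    using col_mult2[OF adj_carrier[OF Uc] Uc i] by simp
  then show ?thesis using U i unfolding unitary_def by simp
qed

lemma unitary3I:
  assumes U: "U \<in> carrier_mat 3 3"
    and cols: "\<forall>i<3. \<forall>j<3. (\<Sum>k<3. cnj (U $$ (k,i)) * U $$ (k,j)) = (if i = j then 1 else 0)"
  shows "unitary 3 U"
proof (rule unitaryI[OF U])
  show "adj U * U = 1\<^sub>m 3"
    using U cols by (intro eq_matI) (auto simp: scalar_prod_def atLeast0LessThan)
qed

abbreviation real_diag :: "nat \<Rightarrow> (nat \<Rightarrow> real) \<Rightarrow> complex mat" where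
  "real_diag n f \<equiv> mat_diag n (\<lambda>i. complex_of_real (f i))"

lemma adj_real_diag[simp]: "adj (real_diag n f) = real_diag n f"
  by (rule eq_matI) auto

definition cons_block :: "complex \<Rightarrow> complex mat \<Rightarrow> complex mat" where
  "cons_block c M = mat (Suc (dim_row M)) (Suc (dim_col M))
     (\<lambda>(i,j). if i = 0 \<and> j = 0 then c else if i = 0 \<or> j = 0 then 0 else M $$ (i - 1, j - 1))"

lemma cons_block_dims[simp]:
  "dim_row (cons_block c M) = Suc (dim_row M)" "dim_col (cons_block c M) = Suc (dim_col M)"
  unfolding cons_block_def by simp_all

lemma cons_block_carrier[simp]: "M \<in> carrier_mat m k \<Longrightarrow> cons_block c M \<in> carrier_mat (Suc m) (Suc k)"
  unfolding carrier_mat_def by simp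

lemma cons_block_index:
  "i < Suc (dim_row M) \<Longrightarrow> j < Suc (dim_col M) \<Longrightarrow> cons_block c M $$ (i,j) =
     (if i = 0 \<and> j = 0 then c else if i = 0 \<or> j = 0 then 0 else M $$ (i - 1, j - 1))"
  unfolding cons_block_def by simp

lemma cons_block_mult:
  assumes M: "M \<in> carrier_mat m k" and N: "N \<in> carrier_mat k l"
  shows "cons_block a M * cons_block b N = cons_block (a * b) (M * N)"
proof (rule eq_matI)
  fix i j assume "i < dim_row (cons_block (a * b) (M * N))" "j < dim_col (cons_block (a * b) (M * N))"
  then have i: "i < Suc m" and j: "j < Suc l" using M N by simp_all
  have "(cons_block a M * cons_block b N) $$ (i,j) =
      (\<Sum>t<Suc k. cons_block a M $$ (i,t) * cons_block b N $$ (t,j))"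
    using i j M N by (simp add: scalar_prod_def row_def col_def atLeast0LessThan)
  also have "\<dots> = cons_block a M $$ (i,0) * cons_block b N $$ (0,j)
      + (\<Sum>t<k. cons_block a M $$ (i,Suc t) * cons_block b N $$ (Suc t,j))"
    by (rule sum.lessThan_Suc_shift)
  also have "\<dots> = cons_block (a * b) (M * N) $$ (i, j)"
    using i j M N
    by (cases i; cases j) (simp_all add: cons_block_index scalar_prod_def row_def col_def atLeast0LessThan)
  finally show "(cons_block a M * cons_block b N) $$ (i,j) = cons_block (a * b) (M * N) $$ (i, j)" .
qed (use M N in simp_all)

lemma adj_cons_block: "adj (cons_block c M) = cons_block (cnj c) (adj M)"
  by (rule eq_matI) (auto simp: cons_block_index)

lemma cons_block_real_diag:
  "cons_block (complex_of_real r) (real_diag m f) = real_diag (Suc m) (\<lambda>i. if i = 0 then r else f (i - 1))"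
  by (rule eq_matI) (auto simp: cons_block_index)

lemma unitary_cons_block:
  assumes "unitary m U"
  shows "unitary (Suc m) (cons_block 1 U)"
proof (rule unitaryI)
  have Uc: "U \<in> carrier_mat m m" using assms unitary_carrier by blast
  show "cons_block 1 U \<in> carrier_mat (Suc m) (Suc m)" using Uc by simp
  have "cons_block 1 (1\<^sub>m m) = 1\<^sub>m (Suc m)"
    by (rule eq_matI) (auto simp: cons_block_index)
  then show "adj (cons_block 1 U) * cons_block 1 U = 1\<^sub>m (Suc m)"
    using assms Uc unfolding unitary_def by (simp add: adj_cons_block cons_block_mult[of _ m m])
qed

lemma exists_eigenvector:
  fixes A :: "complex mat"
  assumes A: "A \<in> carrier_mat n n" and n: "0 < n"
  shows "\<exists>a v. v \<in> carrier_vec n \<and> v \<noteq> 0\<^sub>v n \<and> A *\<^sub>v v = a \<cdot>\<^sub>v v"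
proof -
  obtain as where cp: "char_poly A = (\<Prod>a\<leftarrow>as. [:- a, 1:])" "length as = n"
    using char_poly_factorized[OF A] by auto
  then obtain a as' where "as = a # as'" using n by (cases as) auto
  then have "poly (char_poly A) a = 0" using cp(1) by simp
  then have "eigenvalue A a" using eigenvalue_root_char_poly[OF A] by simp
  then show ?thesis unfolding eigenvalue_def eigenvector_def using A by auto
qed

lemma corthogonal_basis_extension:
  fixes v :: "complex vec"
  assumes v: "v \<in> carrier_vec n" "v \<noteq> 0\<^sub>v n" and n: "0 < n"
  shows "\<exists>ws. set ws \<subseteq> carrier_vec n \<and> corthogonal ws \<and> length ws = n \<and> ws ! 0 = v"
proof -
  interpret cof_vec_space n "TYPE(complex)" .
  define b where "b = basis_completion v"
  from basis_completion[OF v, folded b_def]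
  have b: "set b \<subseteq> carrier_vec n" "distinct b" "\<not> lin_dep (set b)" "length b = n" "hd b = v"
    by auto
  define ws where "ws = gram_schmidt n b"
  from gram_schmidt_result[OF b(1-3) ws_def]
  have ws: "corthogonal ws" "set ws \<subseteq> carrier_vec n" "length ws = n" using b(4) by auto
  from b(4,5) n obtain vs where "b = v # vs" by (cases b) auto
  then have "hd ws = v" unfolding ws_def using gram_schmidt_hd[OF v(1)] by simp
  then have "ws ! 0 = v" using ws(3) n by (cases ws) auto
  then show ?thesis using ws by auto
qed

lemma unitary_of_corthogonal:
  assumes ws: "set ws \<subseteq> carrier_vec n" "corthogonal ws" "length ws = n"
  shows "\<exists>U c. unitary n U \<and> (\<forall>j<n. col U j = c j \<cdot>\<^sub>v ws ! j)"
proof -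
  define c where "c j = complex_of_real (1 / sqrt (Re (ws ! j \<bullet>c ws ! j)))" for j
  define U where "U = mat n n (\<lambda>(k,j). c j * ws ! j $ k)"
  have wc: "ws ! j \<in> carrier_vec n" if "j < n" for j using ws that by auto
  have normalized: "cnj (c j) * c j * (ws ! j \<bullet>c ws ! j) = 1" if j: "j < n" for j
  proof -
    define r where "r = Re (ws ! j \<bullet>c ws ! j)"
    have "ws ! j \<bullet>c ws ! j \<ge> 0" "ws ! j \<bullet>c ws ! j \<noteq> 0"
      using corthogonalD[OF ws(2), of j j] ws(3) j by auto
    then have eq: "ws ! j \<bullet>c ws ! j = complex_of_real r" and r: "r > 0"
      unfolding r_def by (auto simp: less_eq_complex_def complex_eq_iff)
    have "(1 / sqrt r) * (1 / sqrt r) * r = 1" using r by (simp add: real_sqrt_mult_self)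
    then show ?thesis
      unfolding eq c_def r_def[symmetric] complex_cnj_complex_of_real of_real_mult[symmetric] by simp
  qed
  have Uc: "U \<in> carrier_mat n n" unfolding U_def by simp
  have "adj U * U = 1\<^sub>m n"
  proof (rule eq_matI)
    fix i j assume "i < dim_row (1\<^sub>m n)" "j < dim_col (1\<^sub>m n)"
    then have i: "i < n" and j: "j < n" by simp_all
    have "(adj U * U) $$ (i,j) = cnj (c i) * c j * (ws ! j \<bullet>c ws ! i)"
      using i j Uc wc[OF i] wc[OF j]
      by (simp add: scalar_prod_def row_def col_def atLeast0LessThan U_def sum_distrib_left mult_ac)
    also have "\<dots> = 1\<^sub>m n $$ (i,j)"
      using normalized[OF i] corthogonalD[OF ws(2), of j i] ws(3) i j by auto
    finally show "(adj U * U) $$ (i,j) = 1\<^sub>m n $$ (i,j)" .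
  qed (use Uc in simp_all)
  moreover have "col U j = c j \<cdot>\<^sub>v ws ! j" if "j < n" for j
    using wc[OF that] that unfolding U_def by (intro eq_vecI) auto
  ultimately show ?thesis using unitaryI[OF Uc] by blast
qed

lemma unitary_with_eigenvector_col:
  assumes A: "A \<in> carrier_mat n n" and n: "0 < n"
  shows "\<exists>U a. unitary n U \<and> A *\<^sub>v col U 0 = a \<cdot>\<^sub>v col U 0"
proof -
  obtain a v where v: "v \<in> carrier_vec n" "v \<noteq> 0\<^sub>v n" and Av: "A *\<^sub>v v = a \<cdot>\<^sub>v v"
    using exists_eigenvector[OF A n] by auto
  obtain ws where ws: "set ws \<subseteq> carrier_vec n" "corthogonal ws" "length ws = n" "ws ! 0 = v"
    using corthogonal_basis_extension[OF v n] by auto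
  obtain U c where U: "unitary n U" and col: "col U 0 = c 0 \<cdot>\<^sub>v v"
    using unitary_of_corthogonal[OF ws(1-3)] n ws(4) by auto
  have "A *\<^sub>v col U 0 = a \<cdot>\<^sub>v col U 0"
    unfolding col mult_mat_vec[OF A v(1)] Av by (rule eq_vecI) (use v in simp_all)
  then show ?thesis using U by blast
qed

lemma unitary_conj_col_0:
  assumes U: "unitary n U" and A: "A \<in> carrier_mat n n" and n: "0 < n"
    and eig: "A *\<^sub>v col U 0 = a \<cdot>\<^sub>v col U 0"
  shows "col (adj U * A * U) 0 = a \<cdot>\<^sub>v unit_vec n 0"
proof -
  have Uc: "U \<in> carrier_mat n n" using U unitary_carrier by blast
  have U0: "col U 0 \<in> carrier_vec n" by (rule col_carrier_vec[OF n Uc])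
  have "col (adj U * A * U) 0 = (adj U * A) *\<^sub>v col U 0"
    using A Uc n by (intro col_mult2[of _ n n]) auto
  also have "\<dots> = adj U *\<^sub>v (A *\<^sub>v col U 0)"
    using A Uc U0 by (intro assoc_mult_mat_vec[of _ n n _ n]) auto
  also have "\<dots> = a \<cdot>\<^sub>v (adj U *\<^sub>v col U 0)"
    unfolding eig using Uc U0 by (intro mult_mat_vec[of _ n n]) auto
  also have "\<dots> = a \<cdot>\<^sub>v unit_vec n 0"
    using adj_mult_col[OF U n] by simp
  finally show ?thesis .
qed

lemma hermitian_deflation:
  assumes A: "A \<in> carrier_mat (Suc m) (Suc m)" and herm: "adj A = A"
    and U: "unitary (Suc m) U" and eig: "A *\<^sub>v col U 0 = a \<cdot>\<^sub>v col U 0"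
  shows "\<exists>r B. B \<in> carrier_mat m m \<and> adj B = B \<and> adj U * A * U = cons_block (complex_of_real r) B"
proof -
  define A' where "A' = adj U * A * U"
  have Uc: "U \<in> carrier_mat (Suc m) (Suc m)" using U unitary_carrier by blast
  have A'c: "A' \<in> carrier_mat (Suc m) (Suc m)" unfolding A'_def using A Uc by (metis adj_carrier mult_carrier_mat)
  have herm': "adj A' = A'" unfolding A'_def using adj_conj[OF adj_carrier[OF Uc] A] herm by simp
  have A'sym: "A' $$ (i,j) = cnj (A' $$ (j,i))" if "i < Suc m" "j < Suc m" for i j
    using arg_cong[of _ _ "\<lambda>M. M $$ (i,j)", OF herm'] that A'c by simp
  have col0: "A' $$ (i,0) = (if i = 0 then a else 0)" if "i < Suc m" for i
    using arg_cong[of _ _ "\<lambda>v. v $ i", OF unitary_conj_col_0[OF U A _ eig, folded A'_def]] that A'c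
    by auto
  have row0: "A' $$ (0,j) = (if j = 0 then cnj a else 0)" if "j < Suc m" for j
    using A'sym[of 0 j] col0[OF that] that by auto
  have a_real: "a = complex_of_real (Re a)"
    using col0[of 0] row0[of 0] by (simp add: complex_eq_iff)
  define B where "B = mat m m (\<lambda>(i,j). A' $$ (Suc i, Suc j))"
  have "adj B = B"
  proof (rule eq_matI)
    fix i j assume "i < dim_row B" "j < dim_col B"
    then show "adj B $$ (i,j) = B $$ (i,j)" using A'sym[of "Suc i" "Suc j"] unfolding B_def by simp
  qed (simp_all add: B_def)
  moreover have "A' = cons_block (complex_of_real (Re a)) B"
    using col0 row0 a_real A'c unfolding B_def by (intro eq_matI) (auto simp: cons_block_index)
  moreover have "B \<in> carrier_mat m m" unfolding B_def by simp
  ultimately show ?thesis unfolding A'_def by blast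
qed

theorem hermitian_spectral:
  "A \<in> carrier_mat n n \<Longrightarrow> adj A = A \<Longrightarrow> \<exists>U f. unitary n U \<and> A = U * real_diag n f * adj U"
proof (induction n arbitrary: A)
  case 0
  have "A = 1\<^sub>m 0 * real_diag 0 (\<lambda>_. 0) * adj (1\<^sub>m 0)"
    by (rule eq_matI) (use 0 in simp_all)
  moreover have "unitary 0 (1\<^sub>m 0)" unfolding unitary_def by simp
  ultimately show ?case by (intro exI[of _ "1\<^sub>m 0"] exI[of _ "\<lambda>_. 0"]) simp
next
  case (Suc m)
  obtain U a where U: "unitary (Suc m) U" and eig: "A *\<^sub>v col U 0 = a \<cdot>\<^sub>v col U 0"
    using unitary_with_eigenvector_col[OF Suc.prems(1)] by auto
  obtain r B where B: "B \<in> carrier_mat m m" "adj B = B"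
    and A': "adj U * A * U = cons_block (complex_of_real r) B"
    using hermitian_deflation[OF Suc.prems U eig] by auto
  obtain V g where V: "unitary m V" and Bg: "B = V * real_diag m g * adj V"
    using Suc.IH[OF B] by auto
  have Uc: "U \<in> carrier_mat (Suc m) (Suc m)" and Vc: "V \<in> carrier_mat m m"
    using U V unitary_carrier by auto
  define W where "W = cons_block 1 V"
  define f where "f i = (if i = 0 then r else g (i - 1))" for i
  have Wc: "W \<in> carrier_mat (Suc m) (Suc m)" unfolding W_def using Vc by simp
  have "adj U * A * U = cons_block 1 V * cons_block (complex_of_real r) (real_diag m g) * cons_block 1 (adj V)"
    unfolding A' Bg
    by (simp add: cons_block_mult[OF Vc mat_diag_dim]
        cons_block_mult[OF mult_carrier_mat[OF Vc mat_diag_dim] adj_carrier[OF Vc]])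
  also have "\<dots> = W * real_diag (Suc m) f * adj W"
    unfolding W_def f_def cons_block_real_diag[symmetric] adj_cons_block by simp
  finally have "A = U * (W * real_diag (Suc m) f * adj W) * adj U"
    using unitary_conj_adj_conj[OF U Suc.prems(1)] by metis
  also have "\<dots> = (U * W) * real_diag (Suc m) f * adj (U * W)"
    using Uc Wc by (rule conj_conj) simp
  finally show ?case using unitary_mult[OF U unitary_cons_block[OF V, folded W_def]] by blast
qed

section \<open>Positive semidefinite matrices and the trace norm\<close>

lemma real_diag_quadratic_form:
  assumes w: "w \<in> carrier_vec n"
  shows "conjugate w \<bullet> (real_diag n f *\<^sub>v w) = complex_of_real (\<Sum>i<n. f i * (cmod (w $ i))\<^sup>2)"
proof -
  have "conjugate w \<bullet> (real_diag n f *\<^sub>v w) = (\<Sum>i<n. complex_of_real (f i) * (cnj (w $ i) * w $ i))"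
    using w by (simp add: mat_diag_mult_vec scalar_prod_def atLeast0LessThan mult_ac)
  also have "\<dots> = (\<Sum>i<n. complex_of_real (f i * (cmod (w $ i))\<^sup>2))"
    by (intro sum.cong refl) (metis complex_norm_square mult.commute of_real_mult)
  finally show ?thesis by simp
qed

lemma conj_quadratic_form:
  assumes U: "U \<in> carrier_mat n n" and D: "D \<in> carrier_mat n n" and v: "v \<in> carrier_vec n"
  shows "conjugate v \<bullet> ((U * D * adj U) *\<^sub>v v) = conjugate (adj U *\<^sub>v v) \<bullet> (D *\<^sub>v (adj U *\<^sub>v v))"
proof -
  have w: "adj U *\<^sub>v v \<in> carrier_vec n" by (rule mult_mat_vec_carrier[OF adj_carrier[OF U] v])
  have "(U * D * adj U) *\<^sub>v v = adj (adj U) *\<^sub>v (D *\<^sub>v (adj U *\<^sub>v v))"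
    using assoc_mult_mat_vec[OF mult_carrier_mat[OF U D] adj_carrier[OF U] v]
      assoc_mult_mat_vec[OF U D w] by simp
  then show ?thesis
    using conjugate_scalar_prod_adj[OF adj_carrier[OF U] v mult_mat_vec_carrier[OF D w]] by simp
qed

lemma unitary_diag_eigenvector:
  assumes U: "unitary n U" and i: "i < n"
  shows "(U * real_diag n f * adj U) *\<^sub>v col U i = complex_of_real (f i) \<cdot>\<^sub>v col U i"
proof -
  have Uc: "U \<in> carrier_mat n n" using U unitary_carrier by blast
  have ci: "col U i \<in> carrier_vec n" using Uc i by simp
  have "(U * real_diag n f * adj U) *\<^sub>v col U i = U *\<^sub>v (real_diag n f *\<^sub>v unit_vec n i)"
    using Uc ci adj_mult_col[OF U i] by (simp add: assoc_mult_mat_vec[of _ n n _ n])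
  also have "real_diag n f *\<^sub>v unit_vec n i = complex_of_real (f i) \<cdot>\<^sub>v unit_vec n i"
    using i by (intro eq_vecI) (simp_all add: mat_diag_mult_vec)
  finally show ?thesis using Uc i by (simp add: mult_mat_vec mult_unit_vec)
qed

lemma unitary_diag_eigenvalue:
  assumes U: "unitary n U" and i: "i < n"
  shows "conjugate (col U i) \<bullet> ((U * real_diag n f * adj U) *\<^sub>v col U i) = complex_of_real (f i)"
  using unitary_diag_eigenvector[OF U i] unitary_cols_orthonormal[OF U i i] unitary_carrier[OF U] i
  by simp

lemma real_diag_conj_mult:
  assumes U: "unitary n U"
  shows "(U * real_diag n f * adj U) * (U * real_diag n g * adj U) = U * real_diag n (\<lambda>i. f i * g i) * adj U"
proof -
  have Uc: "U \<in> carrier_mat n n" using U unitary_carrier by blast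
  have "(U * real_diag n f * adj U) * (U * real_diag n g * adj U)
      = U * (real_diag n f * (adj U * (U * (real_diag n g * adj U))))"
    using Uc by (simp add: assoc_mult_mat[of _ n n _ n _ n] mult_carrier_mat[of _ n n _ n])
  also have "\<dots> = U * (real_diag n f * (real_diag n g * adj U))"
    using unitary_cancel_left[OF U mult_carrier_mat[OF mat_diag_dim adj_carrier[OF Uc]]] by simp
  also have "\<dots> = U * (real_diag n f * real_diag n g * adj U)"
    using assoc_mult_mat[OF mat_diag_dim mat_diag_dim adj_carrier[OF Uc]] by simp
  finally show ?thesis using assoc_mult_mat[OF Uc mat_diag_dim adj_carrier[OF Uc]] by simp
qed

lemma mtrace_real_diag_conj:
  assumes U: "unitary n U"
  shows "mtrace (U * real_diag n f * adj U) = (\<Sum>i<n. complex_of_real (f i))"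
proof -
  have Uc: "U \<in> carrier_mat n n" using U unitary_carrier by blast
  have "mtrace (U * real_diag n f * adj U) = mtrace (U * (real_diag n f * adj U))"
    using Uc by (simp add: assoc_mult_mat[of _ n n _ n _ n])
  also have "\<dots> = mtrace ((real_diag n f * adj U) * U)"
    using Uc by (intro mtrace_mult_comm[of _ n n]) auto
  also have "(real_diag n f * adj U) * U = real_diag n f"
    using U Uc unfolding unitary_def by (simp add: assoc_mult_mat[of _ n n _ n _ n])
  finally show ?thesis by (simp add: mtrace_def)
qed

lemma mtrace_eq_sum_unitary_cols:
  assumes U: "unitary n U" and S: "S \<in> carrier_mat n n"
  shows "mtrace S = (\<Sum>i<n. conjugate (col U i) \<bullet> (S *\<^sub>v col U i))"
proof -
  have Uc: "U \<in> carrier_mat n n" using U unitary_carrier by blast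
  have "mtrace S = mtrace ((S * U) * adj U)"
    using U S Uc unfolding unitary_def by (simp add: assoc_mult_mat[of _ n n _ n _ n])
  also have "\<dots> = mtrace (adj U * (S * U))"
    using S Uc by (intro mtrace_mult_comm[of _ n n]) auto
  also have "\<dots> = (\<Sum>i<n. conjugate (col U i) \<bullet> (S *\<^sub>v col U i))"
  proof -
    have "(adj U * (S * U)) $$ (i,i) = conjugate (col U i) \<bullet> (S *\<^sub>v col U i)" if i: "i < n" for i
    proof -
      have "(adj U * (S * U)) $$ (i,i) = row (adj U) i \<bullet> col (S * U) i" using i Uc S by simp
      also have "row (adj U) i = conjugate (col U i)" using i Uc by (simp add: row_adj)
      finally show ?thesis unfolding col_mult2[OF S Uc i] .
    qed
    then show ?thesis unfolding mtrace_def using Uc S by simp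
  qed
  finally show ?thesis .
qed

lemma psd_carrier: "psd_mat n P \<Longrightarrow> P \<in> carrier_mat n n"
  unfolding psd_mat_def by simp

lemma psd_adj: "psd_mat n P \<Longrightarrow> adj P = P"
  unfolding psd_mat_def hermitian_mat_def by simp

lemma psd_quadratic_form: "psd_mat n P \<Longrightarrow> v \<in> carrier_vec n \<Longrightarrow> 0 \<le> Re (conjugate v \<bullet> (P *\<^sub>v v))"
  unfolding psd_mat_def by simp

lemma psd_matI:
  assumes "P \<in> carrier_mat n n" "adj P = P" "\<And>v. v \<in> carrier_vec n \<Longrightarrow> 0 \<le> Re (conjugate v \<bullet> (P *\<^sub>v v))"
  shows "psd_mat n P"
  unfolding psd_mat_def hermitian_mat_def using assms by simp

lemma psd_real_diag_conj:
  assumes U: "unitary n U" and f: "\<And>i. i < n \<Longrightarrow> 0 \<le> f i"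
  shows "psd_mat n (U * real_diag n f * adj U)"
proof (rule psd_matI)
  have Uc: "U \<in> carrier_mat n n" using U unitary_carrier by blast
  show "U * real_diag n f * adj U \<in> carrier_mat n n" using Uc by (rule conj_carrier) simp
  show "adj (U * real_diag n f * adj U) = U * real_diag n f * adj U"
    using adj_conj[OF Uc mat_diag_dim] by simp
  fix v :: "complex vec" assume v: "v \<in> carrier_vec n"
  have "Re (conjugate v \<bullet> ((U * real_diag n f * adj U) *\<^sub>v v))
      = (\<Sum>i<n. f i * (cmod ((adj U *\<^sub>v v) $ i))\<^sup>2)"
    unfolding conj_quadratic_form[OF Uc mat_diag_dim v]
      real_diag_quadratic_form[OF mult_mat_vec_carrier[OF adj_carrier[OF Uc] v]] by simp
  also have "\<dots> \<ge> 0" using f by (intro sum_nonneg) simp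
  finally show "0 \<le> Re (conjugate v \<bullet> ((U * real_diag n f * adj U) *\<^sub>v v))" .
qed

lemma psd_add:
  assumes A: "psd_mat n A" and B: "psd_mat n B"
  shows "psd_mat n (A + B)"
proof (rule psd_matI)
  have Ac: "A \<in> carrier_mat n n" and Bc: "B \<in> carrier_mat n n" using A B psd_carrier by auto
  show "A + B \<in> carrier_mat n n" using Bc by simp
  show "adj (A + B) = A + B" using adj_add[OF Ac Bc] psd_adj[OF A] psd_adj[OF B] by simp
  fix v :: "complex vec" assume v: "v \<in> carrier_vec n"
  have "conjugate v \<bullet> ((A + B) *\<^sub>v v) = conjugate v \<bullet> (A *\<^sub>v v) + conjugate v \<bullet> (B *\<^sub>v v)"
    using Ac Bc v by (simp add: add_mult_distrib_mat_vec scalar_prod_add_distrib[of _ n])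
  then show "0 \<le> Re (conjugate v \<bullet> ((A + B) *\<^sub>v v))"
    using psd_quadratic_form[OF A v] psd_quadratic_form[OF B v] by simp
qed

lemma psd_smult:
  assumes A: "psd_mat n A" and c: "0 \<le> c"
  shows "psd_mat n (complex_of_real c \<cdot>\<^sub>m A)"
proof (rule psd_matI)
  have Ac: "A \<in> carrier_mat n n" using A psd_carrier by auto
  show "complex_of_real c \<cdot>\<^sub>m A \<in> carrier_mat n n" using Ac by simp
  show "adj (complex_of_real c \<cdot>\<^sub>m A) = complex_of_real c \<cdot>\<^sub>m A"
    unfolding adj_smult psd_adj[OF A] by simp
  fix v :: "complex vec" assume v: "v \<in> carrier_vec n"
  have "conjugate v \<bullet> ((complex_of_real c \<cdot>\<^sub>m A) *\<^sub>v v) = complex_of_real c * (conjugate v \<bullet> (A *\<^sub>v v))"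
    unfolding smult_mat_mult_vec[OF Ac v] using Ac v by simp
  then show "0 \<le> Re (conjugate v \<bullet> ((complex_of_real c \<cdot>\<^sub>m A) *\<^sub>v v))"
    using psd_quadratic_form[OF A v] c by simp
qed

lemma psd_conj:
  assumes R: "psd_mat n R" and K: "K \<in> carrier_mat n n"
  shows "psd_mat n (K * R * adj K)"
proof (rule psd_matI)
  have Rc: "R \<in> carrier_mat n n" using R psd_carrier by auto
  show "K * R * adj K \<in> carrier_mat n n" by (rule conj_carrier[OF K Rc])
  show "adj (K * R * adj K) = K * R * adj K" unfolding adj_conj[OF K Rc] psd_adj[OF R] ..
  fix v :: "complex vec" assume v: "v \<in> carrier_vec n"
  show "0 \<le> Re (conjugate v \<bullet> ((K * R * adj K) *\<^sub>v v))"
    unfolding conj_quadratic_form[OF K Rc v]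
    by (rule psd_quadratic_form[OF R mult_mat_vec_carrier[OF adj_carrier[OF K] v]])
qed

lemma norm_preserving_shift:
  fixes x y u :: "nat \<Rightarrow> complex" and \<mu> :: real
  assumes xy: "\<And>k. k < n \<Longrightarrow> x k = y k + complex_of_real \<mu> * u k"
    and eq: "(\<Sum>k<n. cnj (x k) * x k) = (\<Sum>k<n. cnj (y k) * y k)"
    and u: "(\<Sum>k<n. cnj (u k) * u k) = 1"
  shows "2 * \<mu> * Re (\<Sum>k<n. cnj (u k) * y k) + \<mu>\<^sup>2 = 0"
proof -
  define S where "S = (\<Sum>k<n. cnj (u k) * y k)"
  have "(\<Sum>k<n. cnj (x k) * x k) = (\<Sum>k<n. cnj (y k) * y k
      + complex_of_real \<mu> * (cnj (y k) * u k + cnj (u k) * y k) + complex_of_real (\<mu>\<^sup>2) * (cnj (u k) * u k))"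
    by (rule sum.cong) (simp_all add: xy algebra_simps power2_eq_square)
  also have "\<dots> = (\<Sum>k<n. cnj (y k) * y k) + complex_of_real \<mu> * ((\<Sum>k<n. cnj (y k) * u k) + S)
      + complex_of_real (\<mu>\<^sup>2) * (\<Sum>k<n. cnj (u k) * u k)"
    unfolding S_def by (simp add: sum.distrib sum_distrib_left distrib_left)
  also have "(\<Sum>k<n. cnj (y k) * u k) = cnj S"
    unfolding S_def by (simp add: cnj_sum mult.commute)
  finally have "complex_of_real \<mu> * (cnj S + S) + complex_of_real (\<mu>\<^sup>2) = 0"
    using eq u by simp
  then have "Re (complex_of_real \<mu> * (cnj S + S) + complex_of_real (\<mu>\<^sup>2)) = 0" by simp
  then show ?thesis unfolding S_def[symmetric] by (simp add: algebra_simps)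
qed

lemma norm_preserving_shift_eq_0:
  fixes x y u :: "nat \<Rightarrow> complex" and \<mu> :: real
  assumes xy: "\<And>k. k < n \<Longrightarrow> x k = y k + complex_of_real \<mu> * u k"
    and eq: "(\<Sum>k<n. cnj (x k) * x k) = (\<Sum>k<n. cnj (y k) * y k)"
    and u: "(\<Sum>k<n. cnj (u k) * u k) = 1"
    and x: "0 \<le> Re (\<Sum>k<n. cnj (u k) * x k)" and y: "0 \<le> Re (\<Sum>k<n. cnj (u k) * y k)"
  shows "\<mu> = 0"
proof -
  define a where "a = Re (\<Sum>k<n. cnj (u k) * x k)"
  define b where "b = Re (\<Sum>k<n. cnj (u k) * y k)"
  have yx: "\<And>k. k < n \<Longrightarrow> y k = x k + complex_of_real (- \<mu>) * u k" using xy by simp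
  have hb: "2 * \<mu> * b + \<mu>\<^sup>2 = 0"
    unfolding b_def by (rule norm_preserving_shift[OF xy eq u])
  have ha: "2 * (- \<mu>) * a + (- \<mu>)\<^sup>2 = 0"
    unfolding a_def by (rule norm_preserving_shift[OF yx eq[symmetric] u])
  have h1: "2 * \<mu> * b + \<mu> * \<mu> = 0" using hb by (simp add: power2_eq_square)
  have h2: "\<mu> * \<mu> - 2 * \<mu> * a = 0" using ha by (simp add: power2_eq_square)
  have "\<mu> * a + \<mu> * b = 0" using h1 h2 by linarith
  then have "\<mu> = 0 \<or> a + b = 0" by (simp add: distrib_left[symmetric])
  moreover have "a + b = 0 \<Longrightarrow> b = 0" using x y unfolding a_def b_def by simp
  ultimately show ?thesis using hb by auto
qed

text \<open>P u and Q u have equal length (as P P = Q Q), differ by \<mu> u and make nonnegative inner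
  products with u; this forces \<mu> = 0.\<close>
lemma psd_square_eigenvalue_eq_0:
  assumes P: "psd_mat n P" and Q: "psd_mat n Q" and PQ: "P * P = Q * Q"
    and u: "u \<in> carrier_vec n" "conjugate u \<bullet> u = 1"
    and eig: "(P - Q) *\<^sub>v u = complex_of_real \<mu> \<cdot>\<^sub>v u"
  shows "\<mu> = 0"
proof -
  have Pc: "P \<in> carrier_mat n n" and Qc: "Q \<in> carrier_mat n n" using P Q psd_carrier by auto
  define x where "x = P *\<^sub>v u"
  define y where "y = Q *\<^sub>v u"
  have xc: "x \<in> carrier_vec n" and yc: "y \<in> carrier_vec n" unfolding x_def y_def using Pc Qc u by auto
  have shift: "x $ k = y $ k + complex_of_real \<mu> * u $ k" if "k < n" for k
  proof -
    have "x $ k - y $ k = complex_of_real \<mu> * u $ k"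
      using arg_cong[of _ _ "\<lambda>v. v $ k", OF eig] that xc yc u Pc Qc
      unfolding x_def y_def by (simp add: minus_mult_distrib_mat_vec)
    then show ?thesis by (simp add: algebra_simps)
  qed
  have "conjugate x \<bullet> x = conjugate u \<bullet> ((P * P) *\<^sub>v u)"
    using conjugate_scalar_prod_adj[OF Pc u(1) xc] psd_adj[OF P] Pc u unfolding x_def by simp
  moreover have "conjugate y \<bullet> y = conjugate u \<bullet> ((Q * Q) *\<^sub>v u)"
    using conjugate_scalar_prod_adj[OF Qc u(1) yc] psd_adj[OF Q] Qc u unfolding y_def by simp
  ultimately have "conjugate x \<bullet> x = conjugate y \<bullet> y" using PQ by simp
  moreover have "0 \<le> Re (conjugate u \<bullet> x)" "0 \<le> Re (conjugate u \<bullet> y)"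
    unfolding x_def y_def using psd_quadratic_form[OF P u(1)] psd_quadratic_form[OF Q u(1)] by auto
  ultimately show "\<mu> = 0"
    using norm_preserving_shift_eq_0[of n "\<lambda>k. x $ k" "\<lambda>k. y $ k" \<mu> "\<lambda>k. u $ k", OF shift] u xc yc
    by (simp add: conjugate_scalar_prod_sum)
qed

lemma psd_square_unique:
  assumes P: "psd_mat n P" and Q: "psd_mat n Q" and PQ: "P * P = Q * Q"
  shows "P = Q"
proof -
  have Pc: "P \<in> carrier_mat n n" and Qc: "Q \<in> carrier_mat n n" using P Q psd_carrier by auto
  obtain U \<mu> where U: "unitary n U" and PQ_diag: "P - Q = U * real_diag n \<mu> * adj U"
    using hermitian_spectral[OF minus_carrier_mat[OF Qc, of P]] adj_minus[OF Pc Qc] psd_adj[OF P] psd_adj[OF Q]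
    by auto
  have Uc: "U \<in> carrier_mat n n" using U unitary_carrier by blast
  have "\<mu> i = 0" if i: "i < n" for i
  proof (rule psd_square_eigenvalue_eq_0[OF P Q PQ])
    show "col U i \<in> carrier_vec n" using Uc i by simp
    show "conjugate (col U i) \<bullet> col U i = 1" using unitary_cols_orthonormal[OF U i i] by simp
    show "(P - Q) *\<^sub>v col U i = complex_of_real (\<mu> i) \<cdot>\<^sub>v col U i"
      unfolding PQ_diag by (rule unitary_diag_eigenvector[OF U i])
  qed
  then have "real_diag n \<mu> = 0\<^sub>m n n" by (intro eq_matI) auto
  then have PQ0: "P - Q = 0\<^sub>m n n" unfolding PQ_diag using Uc by simp
  show "P = Q"
  proof (rule eq_matI)
    fix i j assume "i < dim_row Q" "j < dim_col Q"
    then show "P $$ (i,j) = Q $$ (i,j)" using arg_cong[of _ _ "\<lambda>M. M $$ (i,j)", OF PQ0] Pc Qc by simp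
  qed (use Pc Qc in simp_all)
qed

lemma psd_sqrt_eqI:
  assumes "psd_mat (dim_row M) R" "R * R = M"
  shows "psd_sqrt M = R"
  unfolding psd_sqrt_def
proof (rule the_equality)
  fix P assume "psd_mat (dim_row M) P \<and> P * P = M"
  then show "P = R" using psd_square_unique[of "dim_row M" P R] assms by simp
qed (use assms in simp)

lemma trace_norm_hermitian:
  assumes X: "X \<in> carrier_mat n n" and herm: "adj X = X"
  shows "\<exists>U f. unitary n U \<and> X = U * real_diag n f * adj U \<and> trace_norm X = (\<Sum>i<n. \<bar>f i\<bar>)"
proof -
  obtain U f where U: "unitary n U" and X_diag: "X = U * real_diag n f * adj U"
    using hermitian_spectral[OF X herm] by auto
  define R where "R = U * real_diag n (\<lambda>i. \<bar>f i\<bar>) * adj U"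
  have "psd_mat n R" unfolding R_def by (rule psd_real_diag_conj[OF U]) simp
  moreover have "R * R = U * real_diag n (\<lambda>i. \<bar>f i\<bar> * \<bar>f i\<bar>) * adj U"
    unfolding R_def by (rule real_diag_conj_mult[OF U])
  moreover have "(\<lambda>i. \<bar>f i\<bar> * \<bar>f i\<bar>) = (\<lambda>i. f i * f i)" by (simp add: abs_mult_self_eq)
  moreover have "U * real_diag n (\<lambda>i. f i * f i) * adj U = adj X * X"
    unfolding herm unfolding X_diag by (rule real_diag_conj_mult[OF U, symmetric])
  ultimately have "psd_sqrt (adj X * X) = R" using X by (intro psd_sqrt_eqI) simp_all
  then have "trace_norm X = Re (mtrace R)" unfolding trace_norm_def by simp
  also have "\<dots> = (\<Sum>i<n. \<bar>f i\<bar>)"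
    unfolding R_def mtrace_real_diag_conj[OF U] by (simp flip: of_real_sum)
  finally have "trace_norm X = (\<Sum>i<n. \<bar>f i\<bar>)" .
  then show ?thesis using U X_diag by blast
qed

lemma trace_norm_diff_le:
  assumes R1: "psd_mat n R1" and R2: "psd_mat n R2"
  shows "trace_norm (R1 - R2) \<le> Re (mtrace R1) + Re (mtrace R2)"
proof -
  have R1c: "R1 \<in> carrier_mat n n" and R2c: "R2 \<in> carrier_mat n n" using R1 R2 psd_carrier by auto
  obtain U f where U: "unitary n U" and X_diag: "R1 - R2 = U * real_diag n f * adj U"
    and tn: "trace_norm (R1 - R2) = (\<Sum>i<n. \<bar>f i\<bar>)"
    using trace_norm_hermitian[OF minus_carrier_mat[OF R2c, of R1]] adj_minus[OF R1c R2c] psd_adj[OF R1] psd_adj[OF R2]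
    by auto
  have Uc: "U \<in> carrier_mat n n" using U unitary_carrier by blast
  define a where "a i = Re (conjugate (col U i) \<bullet> (R1 *\<^sub>v col U i))" for i
  define b where "b i = Re (conjugate (col U i) \<bullet> (R2 *\<^sub>v col U i))" for i
  have "\<bar>f i\<bar> \<le> a i + b i" if i: "i < n" for i
  proof -
    have ci: "col U i \<in> carrier_vec n" using Uc i by simp
    have "complex_of_real (f i) = conjugate (col U i) \<bullet> ((R1 - R2) *\<^sub>v col U i)"
      unfolding X_diag by (rule unitary_diag_eigenvalue[OF U i, symmetric])
    also have "\<dots> = conjugate (col U i) \<bullet> (R1 *\<^sub>v col U i) - conjugate (col U i) \<bullet> (R2 *\<^sub>v col U i)"
      using ci R1c R2c by (simp add: minus_mult_distrib_mat_vec scalar_prod_minus_distrib[of _ n])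
    finally have "f i = a i - b i" unfolding a_def b_def by (metis Re_complex_of_real minus_complex.simps(1))
    moreover have "0 \<le> a i" "0 \<le> b i"
      unfolding a_def b_def using psd_quadratic_form[OF R1 ci] psd_quadratic_form[OF R2 ci] by auto
    ultimately show ?thesis by simp
  qed
  then have "trace_norm (R1 - R2) \<le> (\<Sum>i<n. a i) + (\<Sum>i<n. b i)"
    unfolding tn sum.distrib[symmetric] by (intro sum_mono) simp
  also have "\<dots> = Re (mtrace R1) + Re (mtrace R2)"
    unfolding a_def b_def mtrace_eq_sum_unitary_cols[OF U R1c] mtrace_eq_sum_unitary_cols[OF U R2c]
    by (simp add: Re_sum)
  finally show ?thesis .
qed

lemma trace_norm_diff_orthogonal:
  assumes A: "psd_mat n A" and B: "psd_mat n B" and AB: "A * B = 0\<^sub>m n n"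
  shows "trace_norm (A - B) = Re (mtrace A) + Re (mtrace B)"
proof -
  have Ac: "A \<in> carrier_mat n n" and Bc: "B \<in> carrier_mat n n" using A B psd_carrier by auto
  have "B * A = adj (A * B)" using adj_mult[OF Ac Bc] psd_adj[OF A] psd_adj[OF B] by simp
  then have BA: "B * A = 0\<^sub>m n n" unfolding AB by (intro eq_matI) auto
  have "adj (A - B) * (A - B) = A * A - 0\<^sub>m n n - (0\<^sub>m n n - B * B)"
    unfolding adj_minus[OF Ac Bc] psd_adj[OF A] psd_adj[OF B]
      minus_mult_distrib_mat[OF Ac Bc minus_carrier_mat[OF Bc]]
      mult_minus_distrib_mat[OF Ac Ac Bc] mult_minus_distrib_mat[OF Bc Ac Bc] AB BA ..
  also have "\<dots> = A * A + 0\<^sub>m n n + (0\<^sub>m n n + B * B)"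
    using Ac Bc by (intro eq_matI) auto
  also have "\<dots> = (A + B) * (A + B)"
    unfolding add_mult_distrib_mat[OF Ac Bc add_carrier_mat[OF Bc]]
      mult_add_distrib_mat[OF Ac Ac Bc] mult_add_distrib_mat[OF Bc Ac Bc] AB BA ..
  finally have "psd_sqrt (adj (A - B) * (A - B)) = A + B"
    using psd_add[OF A B] Ac Bc by (intro psd_sqrt_eqI) auto
  then show ?thesis unfolding trace_norm_def using mtrace_add[OF Ac Bc] by simp
qed

section \<open>Noisy channels, local operations and pure states\<close>

lemma mtrace_unitary_conj:
  assumes K: "unitary n K" and R: "R \<in> carrier_mat n n"
  shows "mtrace (K * R * adj K) = mtrace R"
proof -
  have Kc: "K \<in> carrier_mat n n" using K unitary_carrier by blast
  have "mtrace (K * R * adj K) = mtrace (K * (R * adj K))"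
    using assoc_mult_mat[OF Kc R adj_carrier[OF Kc]] by simp
  also have "\<dots> = mtrace ((R * adj K) * K)"
    by (rule mtrace_mult_comm[OF Kc mult_carrier_mat[OF R adj_carrier[OF Kc]]])
  also have "\<dots> = mtrace R"
    using assoc_mult_mat[OF R adj_carrier[OF Kc] Kc] K R unfolding unitary_def by simp
  finally show ?thesis .
qed

lemma noisy3_density:
  assumes \<rho>: "density_mat n \<rho>" and K: "unitary n K1" "unitary n K2" "unitary n K3"
    and q: "0 \<le> q1" "0 \<le> q2" "0 \<le> q3" "q1 + q2 + q3 = 1"
  shows "density_mat n (noisy3 q1 q2 q3 K1 K2 K3 \<rho>)"
proof -
  have R: "psd_mat n \<rho>" and tr: "mtrace \<rho> = 1" using \<rho> unfolding density_mat_def by auto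
  have Rc: "\<rho> \<in> carrier_mat n n" using R psd_carrier by auto
  have Kc: "K1 \<in> carrier_mat n n" "K2 \<in> carrier_mat n n" "K3 \<in> carrier_mat n n"
    using K unitary_carrier by auto
  have "psd_mat n (noisy3 q1 q2 q3 K1 K2 K3 \<rho>)" unfolding noisy3_def
    by (intro psd_add psd_smult psd_conj R Kc q(1-3))
  moreover have "mtrace (noisy3 q1 q2 q3 K1 K2 K3 \<rho>) =
      complex_of_real q1 * mtrace (K1 * \<rho> * adj K1) + complex_of_real q2 * mtrace (K2 * \<rho> * adj K2)
      + complex_of_real q3 * mtrace (K3 * \<rho> * adj K3)"
    unfolding noisy3_def using conj_carrier[OF _ Rc] Kc
    by (simp add: mtrace_add[of _ n] mtrace_smult[of _ n])
  moreover have "\<dots> = 1"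
    using mtrace_unitary_conj[OF _ Rc] K tr q(4) by (simp flip: distrib_right of_real_add)
  ultimately show ?thesis unfolding density_mat_def by simp
qed

lemma trace_norm_density_diff_le:
  assumes "density_mat n \<rho>1" "density_mat n \<rho>2"
  shows "trace_norm (\<rho>1 - \<rho>2) \<le> 2"
  using trace_norm_diff_le[of n \<rho>1 \<rho>2] assms unfolding density_mat_def by simp

lemma kron_carrier: "A \<in> carrier_mat a a' \<Longrightarrow> B \<in> carrier_mat b b' \<Longrightarrow> kron A B \<in> carrier_mat (a * b) (a' * b')"
  unfolding kron_def carrier_mat_def by simp

lemma kron_index:
  assumes "A \<in> carrier_mat a a'" "B \<in> carrier_mat b b'" "i < a * b" "j < a' * b'"
  shows "kron A B $$ (i,j) = A $$ (i div b, j div b') * B $$ (i mod b, j mod b')"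
  using assms unfolding kron_def carrier_mat_def by simp

lemma kron_mult:
  assumes A: "A \<in> carrier_mat a k" and C: "C \<in> carrier_mat k c"
    and B: "B \<in> carrier_mat b l" and D: "D \<in> carrier_mat l e" and pos: "0 < b" "0 < l" "0 < e"
  shows "kron A B * kron C D = kron (A * C) (B * D)"
proof (rule eq_matI)
  fix i j assume "i < dim_row (kron (A * C) (B * D))" "j < dim_col (kron (A * C) (B * D))"
  then have i: "i < a * b" and j: "j < c * e" using A B C D by (auto simp: kron_def)
  have "(kron A B * kron C D) $$ (i,j) = (\<Sum>t<k * l. kron A B $$ (i,t) * kron C D $$ (t,j))"
    using i j A B C D by (simp add: kron_def scalar_prod_def row_def col_def atLeast0LessThan)
  also have "\<dots> = (\<Sum>s<k. \<Sum>r<l. kron A B $$ (i, s * l + r) * kron C D $$ (s * l + r, j))"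
    by (rule sum_lessThan_mult_split)
  also have "\<dots> = (\<Sum>s<k. \<Sum>r<l. (A $$ (i div b, s) * C $$ (s, j div e)) * (B $$ (i mod b, r) * D $$ (r, j mod e)))"
    using kron_index[OF A B i] kron_index[OF C D _ j] mult_index_bounds
    by (intro sum.cong refl) (simp add: mult_ac)
  also have "\<dots> = (A * C) $$ (i div b, j div e) * (B * D) $$ (i mod b, j mod e)"
    using i j pos A B C D
    by (simp add: sum_product scalar_prod_def row_def col_def atLeast0LessThan less_mult_imp_div_less)
  also have "\<dots> = kron (A * C) (B * D) $$ (i,j)"
    by (rule kron_index[OF mult_carrier_mat[OF A C] mult_carrier_mat[OF B D] i j, symmetric])
  finally show "(kron A B * kron C D) $$ (i,j) = kron (A * C) (B * D) $$ (i,j)" .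
qed (use A B C D in \<open>simp_all add: kron_def\<close>)

lemma adj_kron:
  assumes A: "A \<in> carrier_mat a a'" and B: "B \<in> carrier_mat b b'" and pos: "0 < b" "0 < b'"
  shows "adj (kron A B) = kron (adj A) (adj B)"
proof (rule eq_matI)
  fix i j assume "i < dim_row (kron (adj A) (adj B))" "j < dim_col (kron (adj A) (adj B))"
  then have i: "i < a' * b'" and j: "j < a * b" using A B by (auto simp: kron_def)
  have "adj (kron A B) $$ (i,j) = cnj (A $$ (j div b, i div b') * B $$ (j mod b, i mod b'))"
    using i j A B kron_index[OF A B j i] by (simp add: kron_def)
  also have "\<dots> = kron (adj A) (adj B) $$ (i,j)"
    using kron_index[OF adj_carrier[OF A] adj_carrier[OF B] i j] i j pos A B
    by (simp add: less_mult_imp_div_less)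
  finally show "adj (kron A B) $$ (i,j) = kron (adj A) (adj B) $$ (i,j)" .
qed (use A B in \<open>simp_all add: kron_def\<close>)

lemma kron_one_one:
  assumes b: "0 < b"
  shows "kron (1\<^sub>m a) (1\<^sub>m b) = 1\<^sub>m (a * b)"
proof (rule eq_matI)
  fix i j assume "i < dim_row (1\<^sub>m (a * b))" "j < dim_col (1\<^sub>m (a * b))"
  then have i: "i < a * b" and j: "j < a * b" by auto
  have "(i div b = j div b \<and> i mod b = j mod b) \<longleftrightarrow> i = j" by (metis div_mult_mod_eq)
  then show "kron (1\<^sub>m a) (1\<^sub>m b) $$ (i,j) = 1\<^sub>m (a * b) $$ (i,j)"
    using kron_index[OF one_carrier_mat one_carrier_mat i j] i j b by (auto simp: less_mult_imp_div_less)
qed (simp_all add: kron_def)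

lemma unitary_kron_id:
  assumes U: "unitary m U" and d: "0 < d"
  shows "unitary (m * d) (kron U (1\<^sub>m d))"
proof (rule unitaryI)
  have Uc: "U \<in> carrier_mat m m" using U unitary_carrier by blast
  show "kron U (1\<^sub>m d) \<in> carrier_mat (m * d) (m * d)" by (rule kron_carrier[OF Uc one_carrier_mat])
  have "adj (kron U (1\<^sub>m d)) * kron U (1\<^sub>m d) = kron (adj U * U) (1\<^sub>m d * 1\<^sub>m d)"
    unfolding adj_kron[OF Uc one_carrier_mat d d] adj_one
    by (rule kron_mult[OF adj_carrier[OF Uc] Uc one_carrier_mat one_carrier_mat d d d])
  also have "\<dots> = 1\<^sub>m (m * d)" using U kron_one_one[OF d] unfolding unitary_def by simp
  finally show "adj (kron U (1\<^sub>m d)) * kron U (1\<^sub>m d) = 1\<^sub>m (m * d)" .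
qed

lemma kron_id_mult_vec:
  assumes K: "K \<in> carrier_mat m m" and v: "v \<in> carrier_vec (m * d)" and a: "a < m" and b: "b < d"
  shows "(kron K (1\<^sub>m d) *\<^sub>v v) $ (a * d + b) = (\<Sum>a'<m. K $$ (a,a') * v $ (a' * d + b))"
proof -
  have ab: "a * d + b < m * d" "(a * d + b) div d = a" "(a * d + b) mod d = b"
    using mult_index_bounds[OF a b] by auto
  have Kc: "kron K (1\<^sub>m d) \<in> carrier_mat (m * d) (m * d)" by (rule kron_carrier[OF K one_carrier_mat])
  have "(kron K (1\<^sub>m d) *\<^sub>v v) $ (a * d + b) = (\<Sum>t<m * d. kron K (1\<^sub>m d) $$ (a * d + b, t) * v $ t)"
    using Kc v ab by (simp add: scalar_prod_def row_def atLeast0LessThan)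
  also have "\<dots> = (\<Sum>a'<m. \<Sum>b'<d. kron K (1\<^sub>m d) $$ (a * d + b, a' * d + b') * v $ (a' * d + b'))"
    by (rule sum_lessThan_mult_split)
  also have "\<dots> = (\<Sum>a'<m. \<Sum>b'<d. if b' = b then K $$ (a,a') * v $ (a' * d + b') else 0)"
    using kron_index[OF K one_carrier_mat ab(1)] ab mult_index_bounds b
    by (intro sum.cong refl) auto
  also have "\<dots> = (\<Sum>a'<m. K $$ (a,a') * v $ (a' * d + b))"
    using b by simp
  finally show ?thesis .
qed

lemma proj_index[simp]: "i < dim_vec v \<Longrightarrow> j < dim_vec v \<Longrightarrow> proj v $$ (i,j) = v $ i * cnj (v $ j)"
  unfolding proj_def by simp

lemma proj_carrier: "v \<in> carrier_vec n \<Longrightarrow> proj v \<in> carrier_mat n n"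
  unfolding proj_def carrier_mat_def carrier_vec_def by simp

lemma proj_psd:
  assumes v: "v \<in> carrier_vec n"
  shows "psd_mat n (proj v)"
proof (rule psd_matI)
  have Pc: "proj v \<in> carrier_mat n n" by (rule proj_carrier[OF v])
  then show "proj v \<in> carrier_mat n n" .
  show "adj (proj v) = proj v" using Pc v by (intro eq_matI) auto
  fix w :: "complex vec" assume w: "w \<in> carrier_vec n"
  define s where "s = (\<Sum>m<n. cnj (v $ m) * w $ m)"
  have "(proj v *\<^sub>v w) $ i = v $ i * s" if i: "i < n" for i
    using i Pc v w unfolding s_def
    by (simp add: scalar_prod_def row_def atLeast0LessThan sum_distrib_left mult.assoc)
  then have "conjugate w \<bullet> (proj v *\<^sub>v w) = s * (\<Sum>i<n. cnj (w $ i) * v $ i)"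
    using w Pc by (simp add: scalar_prod_def atLeast0LessThan sum_distrib_left mult_ac)
  also have "\<dots> = complex_of_real ((cmod s)\<^sup>2)"
    unfolding s_def complex_norm_square by (simp add: cnj_sum mult.commute)
  finally show "0 \<le> Re (conjugate w \<bullet> (proj v *\<^sub>v w))" by simp
qed

lemma proj_density:
  assumes v: "normalized_vec n v"
  shows "density_mat n (proj v)"
proof -
  have vc: "v \<in> carrier_vec n" and nv: "(\<Sum>i<n. (cmod (v $ i))\<^sup>2) = 1"
    using v unfolding normalized_vec_def by auto
  have "mtrace (proj v) = (\<Sum>i<n. complex_of_real ((cmod (v $ i))\<^sup>2))"
    unfolding mtrace_def using proj_carrier[OF vc] vc
    by (intro sum.cong) (simp_all add: complex_norm_square del: of_real_power)
  also have "\<dots> = 1" unfolding of_real_sum[symmetric] nv by simp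
  finally show ?thesis unfolding density_mat_def using proj_psd[OF vc] by simp
qed

lemma conj_proj:
  assumes K: "K \<in> carrier_mat n n" and v: "v \<in> carrier_vec n"
  shows "K * proj v * adj K = proj (K *\<^sub>v v)"
proof (rule eq_matI)
  fix i l assume "i < dim_row (proj (K *\<^sub>v v))" "l < dim_col (proj (K *\<^sub>v v))"
  then have i: "i < n" and l: "l < n" using K unfolding proj_def by auto
  have "(K * proj v) $$ (i,m) = (K *\<^sub>v v) $ i * cnj (v $ m)" if m: "m < n" for m
    using i m K v proj_carrier[OF v]
    by (simp add: scalar_prod_def row_def col_def sum_distrib_right mult.assoc)
  then have "(K * proj v * adj K) $$ (i,l) = (\<Sum>m<n. ((K *\<^sub>v v) $ i * cnj (v $ m)) * cnj (K $$ (l,m)))"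
    using i l K proj_carrier[OF v] by (simp add: scalar_prod_def row_def col_def atLeast0LessThan)
  also have "\<dots> = (K *\<^sub>v v) $ i * cnj (\<Sum>m<n. K $$ (l,m) * v $ m)"
    by (simp add: cnj_sum sum_distrib_left mult_ac)
  also have "(\<Sum>m<n. K $$ (l,m) * v $ m) = (K *\<^sub>v v) $ l"
    using l K v by (simp add: scalar_prod_def row_def atLeast0LessThan)
  finally show "(K * proj v * adj K) $$ (i,l) = proj (K *\<^sub>v v) $$ (i,l)"
    using i l K by simp
qed (use K in \<open>simp_all add: proj_def\<close>)

lemma noisy3_proj:
  assumes "K1 \<in> carrier_mat n n" "K2 \<in> carrier_mat n n" "K3 \<in> carrier_mat n n" "v \<in> carrier_vec n"
  shows "noisy3 q1 q2 q3 K1 K2 K3 (proj v) = complex_of_real q1 \<cdot>\<^sub>m proj (K1 *\<^sub>v v)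
    + complex_of_real q2 \<cdot>\<^sub>m proj (K2 *\<^sub>v v) + complex_of_real q3 \<cdot>\<^sub>m proj (K3 *\<^sub>v v)"
  unfolding noisy3_def conj_proj[OF assms(1,4)] conj_proj[OF assms(2,4)]
    conj_proj[OF assms(3,4)] ..

lemma proj_mult_eq_0:
  assumes a: "a \<in> carrier_vec n" and b: "b \<in> carrier_vec n" and ab: "conjugate a \<bullet> b = 0"
  shows "proj a * proj b = 0\<^sub>m n n"
proof (rule eq_matI)
  fix i l assume "i < dim_row (0\<^sub>m n n :: complex mat)" "l < dim_col (0\<^sub>m n n :: complex mat)"
  then have i: "i < n" and l: "l < n" by auto
  have "(proj a * proj b) $$ (i,l) = a $ i * cnj (b $ l) * (conjugate a \<bullet> b)"
    using i l a b proj_carrier[OF a] proj_carrier[OF b]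
    by (simp add: scalar_prod_def row_def col_def sum_distrib_left mult_ac)
  then show "(proj a * proj b) $$ (i,l) = 0\<^sub>m n n $$ (i,l)" using ab i l by simp
qed (use a b proj_carrier in auto)

lemma noisy3_proj_mult_eq_0:
  assumes K: "K1 \<in> carrier_mat n n" "K2 \<in> carrier_mat n n" "K3 \<in> carrier_mat n n"
    and K': "K1' \<in> carrier_mat n n" "K2' \<in> carrier_mat n n" "K3' \<in> carrier_mat n n"
    and v: "v \<in> carrier_vec n"
    and orth: "\<And>K K'. K \<in> {K1, K2, K3} \<Longrightarrow> K' \<in> {K1', K2', K3'} \<Longrightarrow> conjugate (K *\<^sub>v v) \<bullet> (K' *\<^sub>v v) = 0"
  shows "noisy3 q1 q2 q3 K1 K2 K3 (proj v) * noisy3 r1 r2 r3 K1' K2' K3' (proj v) = 0\<^sub>m n n"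
  unfolding noisy3_proj[OF K v] noisy3_proj[OF K' v]
  using K K' v
  by (intro add_mult_eq_0 mult_add_eq_0 smult_mult_smult_eq_0 add_carrier_mat smult_carrier_mat
      proj_carrier proj_mult_eq_0 mult_mat_vec_carrier orth) auto

lemma conjugate_scalar_prod_kron_id:
  assumes K: "K \<in> carrier_mat m m" and K': "K' \<in> carrier_mat m m" and v: "v \<in> carrier_vec (m * d)"
  shows "conjugate (kron K (1\<^sub>m d) *\<^sub>v v) \<bullet> (kron K' (1\<^sub>m d) *\<^sub>v v)
    = mtrace (adj K * K' * ptrace_B m d (proj v))"
proof -
  let ?F = "\<lambda>a a' a'' b. cnj (K $$ (a,a')) * K' $$ (a,a'') * (v $ (a'' * d + b) * cnj (v $ (a' * d + b)))"
  have x: "kron K (1\<^sub>m d) *\<^sub>v v \<in> carrier_vec (m * d)" "kron K' (1\<^sub>m d) *\<^sub>v v \<in> carrier_vec (m * d)"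
    using mult_mat_vec_carrier[OF kron_carrier[OF K one_carrier_mat[of d]] v]
      mult_mat_vec_carrier[OF kron_carrier[OF K' one_carrier_mat[of d]] v] by auto
  have "conjugate (kron K (1\<^sub>m d) *\<^sub>v v) \<bullet> (kron K' (1\<^sub>m d) *\<^sub>v v)
      = (\<Sum>a<m. \<Sum>b<d. cnj ((kron K (1\<^sub>m d) *\<^sub>v v) $ (a * d + b)) * (kron K' (1\<^sub>m d) *\<^sub>v v) $ (a * d + b))"
    unfolding conjugate_scalar_prod_sum[OF x] by (rule sum_lessThan_mult_split)
  also have "\<dots> = (\<Sum>a<m. \<Sum>b<d. \<Sum>a'<m. \<Sum>a''<m. ?F a a' a'' b)"
    using kron_id_mult_vec[OF K v] kron_id_mult_vec[OF K' v]
    by (intro sum.cong refl) (simp add: cnj_sum sum_product del: complex_cnj_mult, simp add: mult_ac)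
  also have "\<dots> = (\<Sum>a<m. \<Sum>a'<m. \<Sum>b<d. \<Sum>a''<m. ?F a a' a'' b)"
    by (rule sum.cong[OF refl], rule sum.swap)
  also have "\<dots> = (\<Sum>a<m. \<Sum>a'<m. \<Sum>a''<m. \<Sum>b<d. ?F a a' a'' b)"
    by (rule sum.cong[OF refl], rule sum.cong[OF refl], rule sum.swap)
  also have "\<dots> = (\<Sum>a'<m. \<Sum>a<m. \<Sum>a''<m. \<Sum>b<d. ?F a a' a'' b)"
    by (rule sum.swap)
  also have "\<dots> = (\<Sum>a'<m. \<Sum>a''<m. \<Sum>a<m. \<Sum>b<d. ?F a a' a'' b)"
    by (rule sum.cong[OF refl], rule sum.swap)
  also have "\<dots> = (\<Sum>a'<m. \<Sum>a''<m. (adj K * K') $$ (a',a'') * ptrace_B m d (proj v) $$ (a'',a'))"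
    using K K' v mult_index_bounds
    by (intro sum.cong refl) (simp add: ptrace_B_def scalar_prod_def row_def col_def atLeast0LessThan
        sum_product)
  also have "\<dots> = mtrace (adj K * K' * ptrace_B m d (proj v))"
    using K K' by (simp add: mtrace_def ptrace_B_def scalar_prod_def row_def col_def atLeast0LessThan)
  finally show ?thesis .
qed

section \<open>The optimal probe\<close>

lemma unitary_kraus: "unitary 3 L1" "unitary 3 L2" "unitary 3 L3" "unitary 3 S1" "unitary 3 S2" "unitary 3 S3"
  unfolding L1_def L2_def L3_def S1_def S2_def S3_def
  by (intro unitary3I; simp add: mat_of_rows_list_carrier
      mat_of_rows_list_index All_less_3 sum_lessThan_3)+

text \<open>The entry with index 3 a + b is the coefficient of |a>|b>. The three rows of the coefficient
  matrix are orthogonal, with squared norms 1/2, 1/3 and 1/6.\<close>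
definition probe :: "complex vec" where
  "probe = vec 9 (\<lambda>i. [1/2, 1/2, 0, 1/3, -1/3, 1/3, -1/6, 1/6, 1/3] ! i)"

lemma probe_carrier: "probe \<in> carrier_vec 9" unfolding probe_def by simp

lemma probe_normalized: "normalized_vec 9 probe"
  unfolding normalized_vec_def using probe_carrier
  by (simp add: probe_def eval_nat_numeral norm_divide power_divide)

lemma ptrace_B_proj_probe: "ptrace_B 3 3 (proj probe) = mat_diag 3 (\<lambda>i. [1/2, 1/3, 1/6] ! i)"
  by (rule eq_matI) (auto simp: ptrace_B_def probe_def sum_lessThan_3 less_Suc_eq numeral_eq_Suc)

lemma kraus_cross_trace_eq_0:
  assumes "K \<in> {L1, L2, L3}" "K' \<in> {S1, S2, S3}"
  shows "mtrace (adj K * K' * ptrace_B 3 3 (proj probe)) = 0"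
  using assms unfolding ptrace_B_proj_probe
  by (auto simp: mtrace_adj_mult_mat_diag[of _ 3] L1_def L2_def L3_def S1_def S2_def S3_def
      mat_of_rows_list_carrier mat_of_rows_list_index sum_lessThan_3)

lemma probe_kraus_orthogonal:
  assumes "K \<in> {L1, L2, L3}" "K' \<in> {S1, S2, S3}"
  shows "conjugate (kron K (1\<^sub>m 3) *\<^sub>v probe) \<bullet> (kron K' (1\<^sub>m 3) *\<^sub>v probe) = 0"
proof -
  have "K \<in> carrier_mat 3 3" "K' \<in> carrier_mat 3 3"
    using assms unitary_kraus unitary_carrier by auto
  then show ?thesis
    using conjugate_scalar_prod_kron_id[of K 3 K' probe 3] probe_carrier kraus_cross_trace_eq_0[OF assms]
    by simp
qed

lemma probe_entangled: "entangled_pure33 probe"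
proof -
  have "\<not> product_vec33 probe"
  proof
    assume "product_vec33 probe"
    then obtain a b where ab: "probe = vec 9 (\<lambda>k. a $ (k div 3) * b $ (k mod 3))"
      unfolding product_vec33_def by auto
    have "probe $ k = a $ (k div 3) * b $ (k mod 3)" if "k < 9" for k
      using arg_cong[of _ _ "\<lambda>v. v $ k", OF ab] that by simp
    from this[of 0] this[of 5] this[of 2] this[of 3]
    have "probe $ 0 * probe $ 5 = probe $ 2 * probe $ 3" by (simp add: mult_ac)
    then show False unfolding probe_def by simp
  qed
  then show ?thesis unfolding entangled_pure33_def using probe_normalized by simp
qed

lemma probe_not_max_entangled: "\<not> max_entangled33 probe"
proof
  assume "max_entangled33 probe"
  then have "ptrace_B 3 3 (proj probe) $$ (0,0) = ((1/3) \<cdot>\<^sub>m 1\<^sub>m 3) $$ (0,0)"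
    unfolding max_entangled33_def by simp
  then show False unfolding ptrace_B_proj_probe by simp
qed

lemma psucc_single_le_1:
  assumes "0 \<le> q1" "0 \<le> q2" "0 \<le> q3" "q1 + q2 + q3 = 1" "density_mat 3 \<rho>"
  shows "psucc_single q1 q2 q3 \<rho> \<le> 1"
  using trace_norm_density_diff_le[of 3 "chanL q1 q2 q3 \<rho>" "chanS q1 q2 q3 \<rho>"]
    noisy3_density[OF assms(5) unitary_kraus(1-3) assms(1-4)]
    noisy3_density[OF assms(5) unitary_kraus(4-6) assms(1-4)]
  unfolding psucc_single_def chanL_def chanS_def by simp

lemma psucc_bip_le_1:
  assumes "0 \<le> q1" "0 \<le> q2" "0 \<le> q3" "q1 + q2 + q3 = 1" "0 < d" "density_mat (3 * d) \<rho>"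
  shows "psucc_bip q1 q2 q3 d \<rho> \<le> 1"
  using trace_norm_density_diff_le[of "3 * d" "chanL_ext q1 q2 q3 d \<rho>" "chanS_ext q1 q2 q3 d \<rho>"]
    noisy3_density[OF assms(6) unitary_kron_id[OF unitary_kraus(1) assms(5)]
      unitary_kron_id[OF unitary_kraus(2) assms(5)] unitary_kron_id[OF unitary_kraus(3) assms(5)] assms(1-4)]
    noisy3_density[OF assms(6) unitary_kron_id[OF unitary_kraus(4) assms(5)]
      unitary_kron_id[OF unitary_kraus(5) assms(5)] unitary_kron_id[OF unitary_kraus(6) assms(5)] assms(1-4)]
  unfolding psucc_bip_def chanL_ext_def chanS_ext_def by simp

lemma psucc_bip_probe_eq_1:
  assumes q: "0 \<le> q1" "0 \<le> q2" "0 \<le> q3" "q1 + q2 + q3 = 1"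
  shows "psucc_bip q1 q2 q3 3 (proj probe) = 1"
proof -
  define A where "A = chanL_ext q1 q2 q3 3 (proj probe)"
  define B where "B = chanS_ext q1 q2 q3 3 (proj probe)"
  have U: "unitary 9 (kron K (1\<^sub>m 3))" if "K \<in> {L1, L2, L3, S1, S2, S3}" for K
    using unitary_kron_id[of 3 K 3] that unitary_kraus by auto
  have \<rho>: "density_mat 9 (proj probe)" by (rule proj_density[OF probe_normalized])
  have "density_mat 9 A" "density_mat 9 B"
    unfolding A_def B_def chanL_ext_def chanS_ext_def using U q
    by (auto intro!: noisy3_density[OF \<rho>])
  moreover have "A * B = 0\<^sub>m 9 9"
    unfolding A_def B_def chanL_ext_def chanS_ext_def using U probe_carrier probe_kraus_orthogonal
    by (intro noisy3_proj_mult_eq_0) (auto simp: unitary_carrier)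
  ultimately have "trace_norm (A - B) = 2"
    using trace_norm_diff_orthogonal[of 9 A B] unfolding density_mat_def by simp
  then show ?thesis unfolding psucc_bip_def A_def B_def by simp
qed

theorem theorem8:
  fixes q1 q2 q3 :: real
  assumes "0 < q1" "q1 < 1" "0 < q2" "q2 < 1" "0 < q3" "q3 < 1"
    and "q1 + q2 + q3 = 1"
  shows "\<exists>\<psi>. normalized_vec 9 \<psi> \<and> entangled_pure33 \<psi> \<and> \<not> max_entangled33 \<psi> \<and>
     (\<forall>\<rho>. density_mat 3 \<rho> \<longrightarrow> psucc_single q1 q2 q3 \<rho> \<le> psucc_bip q1 q2 q3 3 (proj \<psi>)) \<and>
     (\<forall>d \<rho>. 0 < d \<longrightarrow> density_mat (3 * d) \<rho> \<longrightarrow>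
        psucc_bip q1 q2 q3 d \<rho> \<le> psucc_bip q1 q2 q3 3 (proj \<psi>))"
proof -
  have q: "0 \<le> q1" "0 \<le> q2" "0 \<le> q3" "q1 + q2 + q3 = 1" using assms by auto
  show ?thesis
    using probe_normalized probe_entangled probe_not_max_entangled psucc_bip_probe_eq_1[OF q]
      psucc_single_le_1[OF q] psucc_bip_le_1[OF q]
    by (intro exI[of _ probe]) auto
qed

end
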